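(* Let $K\ge 2$, let $\mathcal{D}$ be a probability distribution on $\mathcal{X}\times\mathcal{Y}$ with $\mathcal{Y}=\{1,\dots,K\}$, and let $\rho$ be a probability distribution over classifiers $h:\mathcal{X}\to\mathcal{Y}$. Then $$\mathbb{E}_{h,h'\sim\rho}[L(h,h')]\;\le\;\frac{2(K-1)}{K}\Big(\mathbb{E}_{h\sim\rho}[L(h)]-\tfrac12\,\mathbb{E}_{h,h'\sim\rho}[D(h,h')]\Big),$$ where $h,h'$ are drawn independently from $\rho$.
   Context: The error rate is $L(h)=\mathbb{E}_{(X,Y)\sim\mathcal{D}}[\mathbb{1}(h(X)\neq Y)]$; the tandem loss is $L(h,h')=\mathbb{E}_{(X,Y)\sim\mathcal{D}}[\mathbb{1}(h(X)\neq Y)\mathbb{1}(h'(X)\neq Y)]$; the disagreement rate is $D(h,h')=\mathbb{E}_{X\sim\mathcal{D}}[\mathbb{1}(h(X)\neq h'(X))]$. *)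

theory Defs
  imports "HOL-Probability.Probability"
begin

definition err :: "('x \<times> nat) measure \<Rightarrow> ('x \<Rightarrow> nat) \<Rightarrow> real" where
  "err D h = (\<integral>z. of_bool (h (fst z) \<noteq> snd z) \<partial>D)"

definition tandem :: "('x \<times> nat) measure \<Rightarrow> ('x \<Rightarrow> nat) \<Rightarrow> ('x \<Rightarrow> nat) \<Rightarrow> real" where
  "tandem D h h' = (\<integral>z. of_bool (h (fst z) \<noteq> snd z) * of_bool (h' (fst z) \<noteq> snd z) \<partial>D)"

definition disagree :: "('x \<times> nat) measure \<Rightarrow> ('x \<Rightarrow> nat) \<Rightarrow> ('x \<Rightarrow> nat) \<Rightarrow> real" where
  "disagree D h h' = (\<integral>z. of_bool (h (fst z) \<noteq> h' (fst z)) \<partial>D)"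

end

theory Submission
  imports Defs
begin

(* Fix a labelled point (x, y) and let q j be the rho-mass of the classifiers voting j at x.
   Since h and h' are drawn independently, the tandem loss at (x, y) is (1 - q y)^2, the error
   is 1 - q y and the disagreement is 1 - sum_j (q j)^2.  With a = sum_{j ~= y} q j = 1 - q y and
   T = sum_{j ~= y} (q j)^2 the right-hand side at (x, y) equals (K - 1)/K * (a^2 + T), so the
   pointwise inequality is Cauchy-Schwarz a^2 <= (K - 1) T.  Fubini then integrates it over D. *)

lemma bounded_Fubini_prob:
  fixes f :: "'a \<Rightarrow> 'b \<Rightarrow> real"
  assumes M: "prob_space M" and N: "prob_space N"
    and f: "case_prod f \<in> borel_measurable (M \<Otimes>\<^sub>M N)"
    and bound: "\<And>x y. x \<in> space M \<Longrightarrow> y \<in> space N \<Longrightarrow> \<bar>f x y\<bar> \<le> B"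
  shows "(\<integral>w. case_prod f w \<partial>(M \<Otimes>\<^sub>M N)) = (\<integral>x. \<integral>y. f x y \<partial>N \<partial>M)"
    and "(\<integral>x. \<integral>y. f x y \<partial>N \<partial>M) = (\<integral>y. \<integral>x. f x y \<partial>M \<partial>N)"
    and "integrable N (\<lambda>y. \<integral>x. f x y \<partial>M)"
proof -
  interpret pair_prob_space M N
    using M N by (simp add: pair_prob_space.intro pair_sigma_finite.intro prob_space_imp_sigma_finite)
  interpret P: prob_space "M \<Otimes>\<^sub>M N"
    by (rule prob_space_pair) (use M N in auto)
  have int: "integrable (M \<Otimes>\<^sub>M N) (case_prod f)"
    by (rule P.integrable_const_bound[where B=B]) (use f bound in \<open>auto simp: space_pair_measure\<close>)
  show "(\<integral>w. case_prod f w \<partial>(M \<Otimes>\<^sub>M N)) = (\<integral>x. \<integral>y. f x y \<partial>N \<partial>M)"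
    using integral_fst'[OF int] by simp
  show "(\<integral>x. \<integral>y. f x y \<partial>N \<partial>M) = (\<integral>y. \<integral>x. f x y \<partial>M \<partial>N)"
    using Fubini_integral[OF int] by simp
  show "integrable N (\<lambda>y. \<integral>x. f x y \<partial>M)"
    using integrable_snd[OF int] .
qed

lemma integral_pair_mult_prob_bounded:
  fixes f :: "'a \<Rightarrow> real" and g :: "'b \<Rightarrow> real"
  assumes M: "prob_space M" and N: "prob_space N"
    and [measurable]: "f \<in> borel_measurable M" "g \<in> borel_measurable N"
    and f_bound: "\<And>x. x \<in> space M \<Longrightarrow> \<bar>f x\<bar> \<le> B"
    and g_bound: "\<And>y. y \<in> space N \<Longrightarrow> \<bar>g y\<bar> \<le> C"
  shows "(\<integral>w. f (fst w) * g (snd w) \<partial>(M \<Otimes>\<^sub>M N)) = (\<integral>x. f x \<partial>M) * (\<integral>y. g y \<partial>N)"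
proof -
  have "(\<integral>w. f (fst w) * g (snd w) \<partial>(M \<Otimes>\<^sub>M N)) = (\<integral>x. \<integral>y. f x * g y \<partial>N \<partial>M)"
  proof (rule bounded_Fubini_prob(1)[OF M N, where B = "B * C", unfolded case_prod_beta'])
    fix x y assume "x \<in> space M" "y \<in> space N"
    then show "\<bar>f x * g y\<bar> \<le> B * C"
      unfolding abs_mult by (intro mult_mono f_bound g_bound) (auto intro: order_trans[OF abs_ge_zero f_bound])
  qed measurable
  then show ?thesis by simp
qed

lemma measurable_eval_pair_compose:
  assumes "(\<lambda>(h, z). h (fst z)) \<in> measurable (M \<Otimes>\<^sub>M D) N" and "g \<in> measurable L M"
  shows "(\<lambda>u. g (fst u) (fst (snd u))) \<in> measurable (L \<Otimes>\<^sub>M D) N"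
  using measurable_compose[OF measurable_Pair[OF measurable_compose[OF measurable_fst assms(2)] measurable_snd] assms(1)]
  by simp

lemma error_sq_le_collision_bound:
  fixes p :: "'a \<Rightarrow> real"
  assumes J: "finite J" and y: "y \<in> J" and sum_p: "(\<Sum>j\<in>J. p j) = 1"
  shows "(1 - p y)\<^sup>2 \<le> 2 * (real (card J) - 1) / real (card J) * ((1 - p y) - 1/2 * (1 - (\<Sum>j\<in>J. (p j)\<^sup>2)))"
proof -
  define S where "S = J - {y}"
  define n where "n = real (card S)"
  define a where "a = (\<Sum>j\<in>S. p j)"
  define T where "T = (\<Sum>j\<in>S. (p j)\<^sup>2)"
  have "card J \<ge> 1"
    using J y by (metis One_nat_def Suc_leI card_gt_0_iff empty_iff)
  then have card_J: "real (card J) = n + 1"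
    using J y by (simp add: S_def n_def of_nat_diff)
  have a: "a = 1 - p y"
    using J y sum_p by (simp add: a_def S_def sum.remove)
  have sum_sq: "(\<Sum>j\<in>J. (p j)\<^sup>2) = (p y)\<^sup>2 + T"
    using J y by (simp add: T_def S_def sum.remove)
  have Cauchy_Schwarz: "a\<^sup>2 \<le> n * T"
    using sum_squared_le_sum_of_squares[of p S] by (simp add: a_def T_def n_def mult.commute)
  have n_nonneg: "0 \<le> n"
    by (simp add: n_def)
  have "a\<^sup>2 \<le> n / (n + 1) * (a\<^sup>2 + T)"
    using Cauchy_Schwarz n_nonneg by (simp add: field_simps)
  also have "\<dots> = 2 * (real (card J) - 1) / real (card J) * ((1 - p y) - 1/2 * (1 - (\<Sum>j\<in>J. (p j)\<^sup>2)))"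
    unfolding card_J sum_sq a[symmetric] using n_nonneg by (simp add: a field_simps power2_eq_square)
  finally show ?thesis
    by (simp add: a)
qed

lemma borel_measurable_of_bool_neq:
  fixes f g :: "'a \<Rightarrow> 'b::countable"
  assumes "f \<in> measurable M (count_space UNIV)" and "g \<in> measurable M (count_space UNIV)"
  shows "(\<lambda>w. of_bool (f w \<noteq> g w) :: real) \<in> borel_measurable M"
  using assms by measurable

definition vote_share :: "('x \<Rightarrow> 'y) measure \<Rightarrow> 'x \<Rightarrow> 'y \<Rightarrow> real" where
  "vote_share \<rho> x j = (\<integral>h. of_bool (h x = j) \<partial>\<rho>)"

context
  fixes \<rho> :: "('x \<Rightarrow> 'y) measure"
  assumes prob_space_\<rho>: "prob_space \<rho>"
begin

interpretation \<rho>: prob_space \<rho>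
  by (rule prob_space_\<rho>)

lemma integrable_of_bool_eval_eq:
  assumes "(\<lambda>h. h x) \<in> measurable \<rho> (count_space UNIV)"
  shows "integrable \<rho> (\<lambda>h. of_bool (h x = j) :: real)"
  by (rule \<rho>.integrable_const_bound[where B = 1]) (use assms in auto)

lemma integral_of_bool_eval_neq:
  assumes "(\<lambda>h. h x) \<in> measurable \<rho> (count_space UNIV)"
  shows "(\<integral>h. of_bool (h x \<noteq> y) \<partial>\<rho>) = 1 - vote_share \<rho> x y"
proof -
  have "(\<integral>h. of_bool (h x \<noteq> y) \<partial>\<rho>) = (\<integral>h. 1 - of_bool (h x = y) \<partial>\<rho>)"
    by (rule Bochner_Integration.integral_cong) (simp_all add: of_bool_def)
  also have "\<dots> = 1 - vote_share \<rho> x y"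
    using integrable_of_bool_eval_eq[OF assms] \<rho>.prob_space
    by (simp add: vote_share_def)
  finally show ?thesis .
qed

lemma integral_tandem_eval:
  assumes "(\<lambda>h. h x) \<in> measurable \<rho> (count_space UNIV)"
  shows "(\<integral>w. of_bool (fst w x \<noteq> y) * of_bool (snd w x \<noteq> y) \<partial>(\<rho> \<Otimes>\<^sub>M \<rho>)) = (1 - vote_share \<rho> x y)\<^sup>2"
  by (subst integral_pair_mult_prob_bounded[OF prob_space_\<rho> prob_space_\<rho>, where B = 1 and C = 1])
     (use assms in \<open>auto simp: integral_of_bool_eval_neq power2_eq_square\<close>)

lemma sum_vote_share:
  assumes "(\<lambda>h. h x) \<in> measurable \<rho> (count_space UNIV)"
    and "finite J" and "\<And>h. h \<in> space \<rho> \<Longrightarrow> h x \<in> J"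
  shows "(\<Sum>j\<in>J. vote_share \<rho> x j) = 1"
proof -
  have "(\<Sum>j\<in>J. vote_share \<rho> x j) = (\<integral>h. (\<Sum>j\<in>J. of_bool (h x = j)) \<partial>\<rho>)"
    unfolding vote_share_def
    by (rule Bochner_Integration.integral_sum[symmetric]) (rule integrable_of_bool_eval_eq[OF assms(1)])
  also have "\<dots> = (\<integral>h. 1 \<partial>\<rho>)"
    by (rule Bochner_Integration.integral_cong) (use assms(2,3) in auto)
  finally show ?thesis
    using \<rho>.prob_space by simp
qed

lemma integral_disagree_eval:
  assumes eval: "(\<lambda>h. h x) \<in> measurable \<rho> (count_space UNIV)"
    and J: "finite J" and eval_in: "\<And>h. h \<in> space \<rho> \<Longrightarrow> h x \<in> J"
  shows "(\<integral>w. of_bool (fst w x \<noteq> snd w x) \<partial>(\<rho> \<Otimes>\<^sub>M \<rho>)) = 1 - (\<Sum>j\<in>J. (vote_share \<rho> x j)\<^sup>2)"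
proof -
  interpret P: prob_space "\<rho> \<Otimes>\<^sub>M \<rho>"
    by (rule prob_space_pair) (rule prob_space_\<rho>)+
  let ?agree = "\<lambda>j w. of_bool (fst w x = j) * of_bool (snd w x = j) :: real"
  have integrable_agree: "integrable (\<rho> \<Otimes>\<^sub>M \<rho>) (?agree j)" for j
    by (rule P.integrable_const_bound[where B = 1]) (use eval in auto)
  have "(\<integral>w. of_bool (fst w x \<noteq> snd w x) \<partial>(\<rho> \<Otimes>\<^sub>M \<rho>)) = (\<integral>w. 1 - (\<Sum>j\<in>J. ?agree j w) \<partial>(\<rho> \<Otimes>\<^sub>M \<rho>))"
  proof (rule Bochner_Integration.integral_cong)
    fix w assume "w \<in> space (\<rho> \<Otimes>\<^sub>M \<rho>)"
    then have "fst w x \<in> J" using eval_in by (auto simp: space_pair_measure)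
    moreover have "(\<Sum>j\<in>J. ?agree j w) = (\<Sum>j\<in>J. if j = fst w x then of_bool (snd w x = fst w x) else 0)"
      by (rule sum.cong) auto
    ultimately show "of_bool (fst w x \<noteq> snd w x) = 1 - (\<Sum>j\<in>J. ?agree j w)"
      using J by simp
  qed simp
  also have "\<dots> = 1 - (\<Sum>j\<in>J. \<integral>w. ?agree j w \<partial>(\<rho> \<Otimes>\<^sub>M \<rho>))"
    using integrable_agree P.prob_space
    by (simp add: Bochner_Integration.integral_sum)
  also have "\<dots> = 1 - (\<Sum>j\<in>J. (vote_share \<rho> x j)\<^sup>2)"
    by (subst integral_pair_mult_prob_bounded[OF prob_space_\<rho> prob_space_\<rho>, where B = 1 and C = 1])
       (use eval in \<open>auto simp: vote_share_def power2_eq_square\<close>)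
  finally show ?thesis .
qed

lemma integral_tandem_eval_le:
  assumes eval: "(\<lambda>h. h x) \<in> measurable \<rho> (count_space UNIV)"
    and J: "finite J" and y: "y \<in> J" and eval_in: "\<And>h. h \<in> space \<rho> \<Longrightarrow> h x \<in> J"
  shows "(\<integral>w. of_bool (fst w x \<noteq> y) * of_bool (snd w x \<noteq> y) \<partial>(\<rho> \<Otimes>\<^sub>M \<rho>))
    \<le> 2 * (real (card J) - 1) / real (card J) *
       ((\<integral>h. of_bool (h x \<noteq> y) \<partial>\<rho>) - 1/2 * (\<integral>w. of_bool (fst w x \<noteq> snd w x) \<partial>(\<rho> \<Otimes>\<^sub>M \<rho>)))"
proof -
  have "(\<Sum>j\<in>J. vote_share \<rho> x j) = 1"
    using eval J eval_in by (rule sum_vote_share)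
  moreover have "(\<integral>w. of_bool (fst w x \<noteq> snd w x) \<partial>(\<rho> \<Otimes>\<^sub>M \<rho>)) = 1 - (\<Sum>j\<in>J. (vote_share \<rho> x j)\<^sup>2)"
    using eval J eval_in by (rule integral_disagree_eval)
  ultimately show ?thesis
    unfolding integral_tandem_eval[OF eval] integral_of_bool_eval_neq[OF eval]
    using error_sq_le_collision_bound[OF J y] by simp
qed

end

theorem lemma4:
  fixes K :: nat
    and D :: "('x \<times> nat) measure"
    and \<rho> :: "('x \<Rightarrow> nat) measure"
  assumes K: "K \<ge> 2"
    and D_prob: "prob_space D"
    and labels: "\<forall>z \<in> space D. snd z \<in> {1..K}"
    and snd_meas: "snd \<in> measurable D (count_space UNIV)"
    and \<rho>_prob: "prob_space \<rho>"
    and classifiers: "\<forall>h \<in> space \<rho>. \<forall>x. h x \<in> {1..K}"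
    and eval_meas: "(\<lambda>(h, z). h (fst z)) \<in> measurable (\<rho> \<Otimes>\<^sub>M D) (count_space UNIV)"
  shows "(\<integral>p. tandem D (fst p) (snd p) \<partial>(\<rho> \<Otimes>\<^sub>M \<rho>))
         \<le> (2 * (real K - 1) / real K) *
            ((\<integral>h. err D h \<partial>\<rho>) - 1/2 * (\<integral>p. disagree D (fst p) (snd p) \<partial>(\<rho> \<Otimes>\<^sub>M \<rho>)))"
proof -
  have \<rho>\<rho>: "prob_space (\<rho> \<Otimes>\<^sub>M \<rho>)"
    by (rule prob_space_pair[OF \<rho>_prob \<rho>_prob])
  have eval: "(\<lambda>u. fst u (fst (snd u))) \<in> measurable (\<rho> \<Otimes>\<^sub>M D) (count_space UNIV)"
    "(\<lambda>u. fst (fst u) (fst (snd u))) \<in> measurable ((\<rho> \<Otimes>\<^sub>M \<rho>) \<Otimes>\<^sub>M D) (count_space UNIV)"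
    "(\<lambda>u. snd (fst u) (fst (snd u))) \<in> measurable ((\<rho> \<Otimes>\<^sub>M \<rho>) \<Otimes>\<^sub>M D) (count_space UNIV)"
    by (rule measurable_eval_pair_compose[OF eval_meas], measurable)+
  have label: "(\<lambda>u. snd (snd u)) \<in> measurable (M \<Otimes>\<^sub>M D) (count_space UNIV)" for M :: "'m measure"
    by (rule measurable_compose[OF measurable_snd snd_meas])
  let ?tandem = "\<lambda>z. \<integral>w. of_bool (fst w (fst z) \<noteq> snd z) * of_bool (snd w (fst z) \<noteq> snd z) \<partial>(\<rho> \<Otimes>\<^sub>M \<rho>) :: real"
  let ?err = "\<lambda>z. \<integral>h. of_bool (h (fst z) \<noteq> snd z) \<partial>\<rho> :: real"
  let ?disagree = "\<lambda>z. \<integral>w. of_bool (fst w (fst z) \<noteq> snd w (fst z)) \<partial>(\<rho> \<Otimes>\<^sub>M \<rho>) :: real"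
  have tandem_swap: "(\<integral>w. tandem D (fst w) (snd w) \<partial>(\<rho> \<Otimes>\<^sub>M \<rho>)) = (\<integral>z. ?tandem z \<partial>D)"
    "integrable D ?tandem"
    unfolding tandem_def
    by (rule bounded_Fubini_prob[OF \<rho>\<rho> D_prob, where B = 1];
        auto simp: case_prod_beta' abs_mult intro!: borel_measurable_times borel_measurable_of_bool_neq eval label)+
  have err_swap: "(\<integral>h. err D h \<partial>\<rho>) = (\<integral>z. ?err z \<partial>D)" "integrable D ?err"
    unfolding err_def
    by (rule bounded_Fubini_prob[OF \<rho>_prob D_prob, where B = 1];
        auto simp: case_prod_beta' intro!: borel_measurable_of_bool_neq eval label)+
  have disagree_swap: "(\<integral>w. disagree D (fst w) (snd w) \<partial>(\<rho> \<Otimes>\<^sub>M \<rho>)) = (\<integral>z. ?disagree z \<partial>D)"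
    "integrable D ?disagree"
    unfolding disagree_def
    by (rule bounded_Fubini_prob[OF \<rho>\<rho> D_prob, where B = 1];
        auto simp: case_prod_beta' intro!: borel_measurable_of_bool_neq eval)+
  have pointwise: "?tandem z \<le> 2 * (real K - 1) / real K * (?err z - 1/2 * ?disagree z)"
    if "z \<in> space D" for z
  proof -
    have "(\<lambda>h. h (fst z)) \<in> measurable \<rho> (count_space UNIV)"
      using measurable_compose[OF measurable_Pair2'[OF that] eval(1)] by simp
    from integral_tandem_eval_le[OF \<rho>_prob this, of "{1..K}" "snd z"] show ?thesis
      using labels classifiers that by simp
  qed
  have "(\<integral>z. ?tandem z \<partial>D) \<le> (\<integral>z. 2 * (real K - 1) / real K * (?err z - 1/2 * ?disagree z) \<partial>D)"
    by (rule integral_mono) (use tandem_swap(2) err_swap(2) disagree_swap(2) pointwise in auto)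
  also have "\<dots> = 2 * (real K - 1) / real K * ((\<integral>z. ?err z \<partial>D) - 1/2 * (\<integral>z. ?disagree z \<partial>D))"
    using err_swap(2) disagree_swap(2) by simp
  finally show ?thesis
    unfolding tandem_swap(1) err_swap(1) disagree_swap(1) .
qed

end
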